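(* Let $f:\mathbb{R}^n\to(-\infty,+\infty]$ be proper, lower semicontinuous and prox-bounded with threshold $\lambda_f>0$, let $0<\lambda<\lambda_f$, and suppose $\operatorname{dom}f$ is convex. Then the following are equivalent: (a) $\partial_p^\lambda f(x)\ne\varnothing$ for every $x\in\operatorname{dom}f$; (b) $P_\lambda f=\operatorname{conv}(P_\lambda f)$ and $\operatorname{dom}[\partial\operatorname{conv}(f+\lambda^{-1}j)]=\operatorname{dom}f$; (c) $P_\lambda f$ is maximally monotone and $\operatorname{dom}[\partial\operatorname{conv}(f+\lambda^{-1}j)]=\operatorname{dom}f$; (d) $f+\lambda^{-1}j$ is convex and $\operatorname{dom}\partial f=\operatorname{dom}f$; (e) $\partial_p^\lambda f=\partial f$ and $\operatorname{dom}\partial f=\operatorname{dom}f$.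
   Context: $j:=\frac12\|\cdot\|^2$. $P_\lambda f(x):=\operatorname{argmin}_y\{f(y)+\frac1{2\lambda}\|y-x\|^2\}$ (set-valued); $\operatorname{conv}(P_\lambda f)$ is the set-valued map $x\mapsto\operatorname{conv}(P_\lambda f(x))$. Prox-bounded with threshold $\lambda_f=\sup\{\lambda>0:\inf_y\{f(y)+\frac1{2\lambda}\|y-x\|^2\}>-\infty\text{ for some }x\}$. $v\in\partial_p^\lambda f(x)$ iff $x\in\operatorname{dom}f$ and $f(y)\ge f(x)+\langle v,y-x\rangle-\frac1{2\lambda}\|y-x\|^2$ for all $y$. $\operatorname{conv}g$ is the convex hull of a function $g$; $\partial$ is the limiting subdifferential. *)

theory Defs
  imports "HOL-Analysis.Analysis" "HOL-Library.Extended_Real"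
begin

definition edom :: "('a \<Rightarrow> ereal) \<Rightarrow> 'a set" where
  "edom f = {x. f x < \<infinity>}"

definition proper_fun :: "('a \<Rightarrow> ereal) \<Rightarrow> bool" where
  "proper_fun f \<longleftrightarrow> (\<forall>x. f x \<noteq> -\<infinity>) \<and> edom f \<noteq> {}"

definition lsc_fun :: "('a::topological_space \<Rightarrow> ereal) \<Rightarrow> bool" where
  "lsc_fun f \<longleftrightarrow> (\<forall>x. f x \<le> Liminf (at x) f)"

definition jfun :: "'a::real_normed_vector \<Rightarrow> real" where
  "jfun x = (norm x)\<^sup>2 / 2"

definition moreau_env :: "('a::real_normed_vector \<Rightarrow> ereal) \<Rightarrow> real \<Rightarrow> 'a \<Rightarrow> ereal" where
  "moreau_env f lam x = (INF y. f y + ereal ((norm (y - x))\<^sup>2 / (2 * lam)))"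

definition prox_bounded :: "('a::real_normed_vector \<Rightarrow> ereal) \<Rightarrow> bool" where
  "prox_bounded f \<longleftrightarrow> (\<exists>lam>0. \<exists>x. moreau_env f lam x > -\<infinity>)"

definition prox_threshold :: "('a::real_normed_vector \<Rightarrow> ereal) \<Rightarrow> ereal" where
  "prox_threshold f = Sup {ereal lam | lam. lam > 0 \<and> (\<exists>x. moreau_env f lam x > -\<infinity>)}"

definition prox_map :: "('a::real_normed_vector \<Rightarrow> ereal) \<Rightarrow> real \<Rightarrow> 'a \<Rightarrow> 'a set" where
  "prox_map f lam x = {y. \<forall>z. f y + ereal ((norm (y - x))\<^sup>2 / (2 * lam))
                              \<le> f z + ereal ((norm (z - x))\<^sup>2 / (2 * lam))}"

definition conv_map :: "('a::real_vector \<Rightarrow> 'b::real_vector set) \<Rightarrow> 'a \<Rightarrow> 'b set" where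
  "conv_map T x = convex hull (T x)"

definition monotone_map :: "('a::real_inner \<Rightarrow> 'a set) \<Rightarrow> bool" where
  "monotone_map T \<longleftrightarrow> (\<forall>x y u v. u \<in> T x \<longrightarrow> v \<in> T y \<longrightarrow> inner (x - y) (u - v) \<ge> 0)"

definition maximal_monotone :: "('a::real_inner \<Rightarrow> 'a set) \<Rightarrow> bool" where
  "maximal_monotone T \<longleftrightarrow> monotone_map T \<and>
     (\<forall>x u. (\<forall>y v. v \<in> T y \<longrightarrow> inner (x - y) (u - v) \<ge> 0) \<longrightarrow> u \<in> T x)"

definition epigraph :: "('a \<Rightarrow> ereal) \<Rightarrow> ('a \<times> real) set" where
  "epigraph g = {(x, t). g x \<le> ereal t}"

definition econvex :: "('a::real_vector \<Rightarrow> ereal) \<Rightarrow> bool" where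
  "econvex g \<longleftrightarrow> convex (epigraph g)"

definition conv_fun :: "('a::real_vector \<Rightarrow> ereal) \<Rightarrow> 'a \<Rightarrow> ereal" where
  "conv_fun g x = (SUP h \<in> {h. econvex h \<and> (\<forall>y. h y \<le> g y)}. h x)"

definition reg_subdiff :: "('a::real_inner \<Rightarrow> ereal) \<Rightarrow> 'a \<Rightarrow> 'a set" where
  "reg_subdiff g x = {v. \<bar>g x\<bar> \<noteq> \<infinity> \<and>
      (\<forall>e>0. \<exists>d>0. \<forall>y. norm (y - x) < d \<longrightarrow>
          g y \<ge> g x + ereal (inner v (y - x) - e * norm (y - x)))}"

definition lim_subdiff :: "('a::real_inner \<Rightarrow> ereal) \<Rightarrow> 'a \<Rightarrow> 'a set" where
  "lim_subdiff g x = {v. \<bar>g x\<bar> \<noteq> \<infinity> \<and>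
      (\<exists>X V. X \<longlonglongrightarrow> x \<and> (\<lambda>k. g (X k)) \<longlonglongrightarrow> g x \<and> V \<longlonglongrightarrow> v \<and>
             (\<forall>k. V k \<in> reg_subdiff g (X k)))}"

definition subdiff_dom :: "('a \<Rightarrow> 'a set) \<Rightarrow> 'a set" where
  "subdiff_dom T = {x. T x \<noteq> {}}"

definition prox_subdiff :: "real \<Rightarrow> ('a::real_inner \<Rightarrow> ereal) \<Rightarrow> 'a \<Rightarrow> 'a set" where
  "prox_subdiff lam f x = {v. x \<in> edom f \<and>
      (\<forall>y. f y \<ge> f x + ereal (inner v (y - x) - (norm (y - x))\<^sup>2 / (2 * lam)))}"

end

theory Submission
  imports Defs
begin

text \<open>
  Everything rests on one identity: v is a lam-proximal subgradient of f at x iff v + x/lam is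
  a global affine-minorant slope of g = f + j/lam at x, iff x lies in the proximal image of
  x + lam v. So (a) says that g has exact affine minorants on its convex domain, i.e. g is convex;
  for convex g, Frechet and limiting subgradients of f are proximal ones, giving (d) and (e).
  Since lam is below the prox-threshold, g and its tilts by quadratics are coercive, hence attain
  their minima; for convex g a minimiser of g + j/lam - <z/lam, .> lies in the proximal image of
  z minus itself, which is the Minty condition, so the proximal map is maximally monotone (c), and
  maximal monotone maps have convex values (b).
  Conversely, if the proximal map has convex values and p is a subgradient of conv g at x, then x
  minimises g - <p, .>, whose minimisers form the proximal image of lam p: otherwise separating x
  from this closed convex set and using coercivity produces an affine minorant of g that exceeds
  conv g at x. This gives a proximal subgradient at every point of dom f.
\<close>

section \<open>Lower semicontinuity and coercivity\<close>

definition minimizers :: "('a \<Rightarrow> 'b::order) \<Rightarrow> 'a set" where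
  "minimizers \<phi> = {x. \<forall>y. \<phi> x \<le> \<phi> y}"

lemma lsc_fun_iff_eventually:
  "lsc_fun f \<longleftrightarrow> (\<forall>x c. c < f x \<longrightarrow> eventually (\<lambda>y. c < f y) (at x))"
  unfolding lsc_fun_def le_Liminf_iff by blast

lemma lsc_fun_open_superlevel:
  assumes "lsc_fun f"
  shows "open {x. c < f x}"
proof (subst open_subopen, intro ballI)
  fix x assume "x \<in> {x. c < f x}"
  then have "c < f x" "eventually (\<lambda>y. c < f y) (at x)"
    using assms unfolding lsc_fun_iff_eventually by blast+
  then obtain T where "open T" "x \<in> T" "\<forall>y\<in>T. y \<noteq> x \<longrightarrow> c < f y"
    unfolding eventually_at_topological by blast
  with \<open>c < f x\<close> show "\<exists>T. open T \<and> x \<in> T \<and> T \<subseteq> {x. c < f x}"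
    by auto
qed

lemma lsc_fun_closed_minimizers:
  assumes "lsc_fun f"
  shows "closed (minimizers f)"
proof -
  have "minimizers f = (\<Inter>y. - {x. f y < f x})"
    by (simp add: minimizers_def set_eq_iff not_less)
  then show ?thesis
    by (simp add: closed_INT closed_Compl lsc_fun_open_superlevel[OF assms])
qed

lemma lsc_fun_add_continuous:
  assumes "lsc_fun f" and "continuous_on UNIV h"
  shows "lsc_fun (\<lambda>x. f x + ereal (h x))"
  unfolding lsc_fun_iff_eventually
proof (intro allI impI)
  fix x c assume c: "c < f x + ereal (h x)"
  obtain r where r: "c < ereal r" "ereal r < f x + ereal (h x)"
    using ereal_dense2[OF c] by blast
  then have r': "ereal (r - h x) < f x"
    by (cases "f x") auto
  obtain s where s: "ereal (r - h x) < ereal s" "ereal s < f x"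
    using ereal_dense2[OF r'] by blast
  have "eventually (\<lambda>y. ereal s < f y) (at x)"
    using assms(1) s(2) by (auto simp: lsc_fun_iff_eventually)
  moreover have "(h \<longlongrightarrow> h x) (at x)"
    using assms(2) by (simp add: continuous_on_def)
  then have "eventually (\<lambda>y. dist (h y) (h x) < s - (r - h x)) (at x)"
    using s(1) by (intro tendstoD) auto
  ultimately show "eventually (\<lambda>y. c < f y + ereal (h y)) (at x)"
  proof eventually_elim
    case (elim y)
    then have "r < s + h y"
      using s(1) by (auto simp: dist_real_def)
    then have "ereal r < f y + ereal (h y)"
      using elim by (cases "f y") auto
    then show ?case using r(1) by (rule less_trans[rotated])
  qed
qed

lemma lsc_fun_add_jfun:
  assumes "lsc_fun f"
  shows "lsc_fun (\<lambda>x. f x + ereal (jfun x / lam))"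
proof -
  have "continuous_on UNIV (\<lambda>x. jfun x / lam)"
    unfolding jfun_def divide_inverse by (intro continuous_intros)
  then show ?thesis
    by (rule lsc_fun_add_continuous[OF assms])
qed

lemma lsc_fun_attains_min_compact:
  assumes "lsc_fun f" "compact K" "K \<noteq> {}"
  shows "\<exists>x\<in>K. \<forall>y\<in>K. f x \<le> f y"
proof (rule ccontr)
  assume no_min: "\<not> ?thesis"
  define m where "m = (INF y\<in>K. f y)"
  have below: "m < f x" if "x \<in> K" for x
  proof -
    have "\<exists>y\<in>K. f y < f x"
      using no_min that by (auto simp: not_le)
    then obtain y where "y \<in> K" "f y < f x" ..
    from INF_lower[OF \<open>y \<in> K\<close>, of f] \<open>f y < f x\<close> show ?thesis
      unfolding m_def by (rule le_less_trans)
  qed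
  have "K \<subseteq> (\<Union>c\<in>{c. m < c}. {x. c < f x})"
  proof
    fix x assume "x \<in> K"
    then obtain c where "m < c" "c < f x"
      using dense[OF below[OF \<open>x \<in> K\<close>]] by blast
    then show "x \<in> (\<Union>c\<in>{c. m < c}. {x. c < f x})" by blast
  qed
  then obtain C where C: "C \<subseteq> {c. m < c}" "finite C" "K \<subseteq> (\<Union>c\<in>C. {x. c < f x})"
    by (rule compactE_image[OF assms(2) lsc_fun_open_superlevel[OF assms(1)]])
  then have "C \<noteq> {}" using assms(3) by auto
  have "Min C \<le> f x" if x: "x \<in> K" for x
  proof -
    obtain c where "c \<in> C" "c < f x"
      using C(3) x by blast
    then show ?thesis
      using Min_le[OF C(2)] by (meson less_imp_le order_trans)
  qed
  then have "Min C \<le> m"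
    unfolding m_def by (rule INF_greatest)
  moreover have "m < Min C"
    using C \<open>C \<noteq> {}\<close> by auto
  ultimately show False by simp
qed

definition quadratically_coercive :: "('a::real_normed_vector \<Rightarrow> ereal) \<Rightarrow> bool" where
  "quadratically_coercive \<phi> \<longleftrightarrow>
     (\<exists>\<delta>>0. \<exists>\<alpha> \<beta>. \<forall>x. ereal (\<delta> * (norm x)\<^sup>2 - \<alpha> * norm x - \<beta>) \<le> \<phi> x)"

lemma quadratic_eventually_greater:
  fixes \<delta> \<alpha> \<beta> r :: real
  assumes "\<delta> > 0"
  shows "\<exists>R\<ge>0. \<forall>t\<ge>R. r < \<delta> * t\<^sup>2 - \<alpha> * t - \<beta>"
proof (intro exI[of _ "max 1 ((\<bar>\<alpha>\<bar> + \<bar>\<beta>\<bar> + \<bar>r\<bar> + 1) / \<delta>)"] conjI allI impI)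
  fix t assume t: "max 1 ((\<bar>\<alpha>\<bar> + \<bar>\<beta>\<bar> + \<bar>r\<bar> + 1) / \<delta>) \<le> t"
  then have "1 \<le> t" "\<bar>\<alpha>\<bar> + \<bar>\<beta>\<bar> + \<bar>r\<bar> + 1 \<le> \<delta> * t"
    using assms by (auto simp: field_simps)
  then have "t * (\<bar>\<alpha>\<bar> + \<bar>\<beta>\<bar> + \<bar>r\<bar> + 1) \<le> t * (\<delta> * t)"
    "1 * (\<bar>\<beta>\<bar> + \<bar>r\<bar> + 1) \<le> t * (\<bar>\<beta>\<bar> + \<bar>r\<bar> + 1)" "\<alpha> * t \<le> \<bar>\<alpha>\<bar> * t"
    by (intro mult_left_mono mult_right_mono; simp)+
  then show "r < \<delta> * t\<^sup>2 - \<alpha> * t - \<beta>"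
    by (simp add: power2_eq_square algebra_simps)
qed (simp add: le_max_iff_disj)

lemma quadratically_coercive_not_MInf:
  assumes "quadratically_coercive \<phi>"
  shows "\<phi> x \<noteq> -\<infinity>"
proof -
  obtain \<delta> \<alpha> \<beta> where "ereal (\<delta> * (norm x)\<^sup>2 - \<alpha> * norm x - \<beta>) \<le> \<phi> x"
    using assms unfolding quadratically_coercive_def by blast
  then show ?thesis by auto
qed

lemma quadratically_coercive_add:
  assumes "quadratically_coercive \<phi>" and "\<And>x. - \<gamma> * norm x - \<kappa> \<le> \<psi> x"
  shows "quadratically_coercive (\<lambda>x. \<phi> x + ereal (\<psi> x))"
proof -
  obtain \<delta> \<alpha> \<beta> where \<delta>: "\<delta> > 0" and bound: "\<And>x. ereal (\<delta> * (norm x)\<^sup>2 - \<alpha> * norm x - \<beta>) \<le> \<phi> x"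
    using assms(1) unfolding quadratically_coercive_def by blast
  have "ereal (\<delta> * (norm x)\<^sup>2 - (\<alpha> + \<gamma>) * norm x - (\<beta> + \<kappa>)) \<le> \<phi> x + ereal (\<psi> x)" for x
  proof -
    have "\<delta> * (norm x)\<^sup>2 - (\<alpha> + \<gamma>) * norm x - (\<beta> + \<kappa>) \<le> (\<delta> * (norm x)\<^sup>2 - \<alpha> * norm x - \<beta>) + \<psi> x"
      using assms(2)[of x] by (simp add: algebra_simps)
    also have "ereal \<dots> \<le> \<phi> x + ereal (\<psi> x)"
      using add_right_mono[OF bound[of x], of "ereal (\<psi> x)"] by simp
    finally show ?thesis by simp
  qed
  then show ?thesis
    unfolding quadratically_coercive_def using \<delta> by blast
qed

lemma lsc_coercive_attains_min:
  fixes \<phi> :: "'a::euclidean_space \<Rightarrow> ereal"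
  assumes lsc: "lsc_fun \<phi>" and coercive: "quadratically_coercive \<phi>"
    and "closed F" "F \<noteq> {}"
  shows "\<exists>x\<in>F. \<forall>y\<in>F. \<phi> x \<le> \<phi> y"
proof (cases "\<forall>y\<in>F. \<phi> y = \<infinity>")
  case True
  obtain x where "x \<in> F"
    using \<open>F \<noteq> {}\<close> by blast
  with True show ?thesis by auto
next
  case False
  then obtain x0 where "x0 \<in> F" "\<phi> x0 \<noteq> \<infinity>"
    by blast
  then obtain r0 where x0: "x0 \<in> F" "\<phi> x0 = ereal r0"
    using quadratically_coercive_not_MInf[OF coercive, of x0] by (cases "\<phi> x0") auto
  obtain \<delta> \<alpha> \<beta> where \<delta>: "\<delta> > 0" and bound: "\<And>x. ereal (\<delta> * (norm x)\<^sup>2 - \<alpha> * norm x - \<beta>) \<le> \<phi> x"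
    using coercive unfolding quadratically_coercive_def by blast
  obtain R where R: "\<And>t. t \<ge> R \<Longrightarrow> r0 < \<delta> * t\<^sup>2 - \<alpha> * t - \<beta>"
    using quadratic_eventually_greater[OF \<delta>] by blast
  define K where "K = F \<inter> cball 0 (max R (norm x0))"
  have "compact K"
    unfolding K_def using \<open>closed F\<close> by (intro closed_Int_compact compact_cball)
  moreover have "K \<noteq> {}"
    unfolding K_def using x0(1) by auto
  ultimately obtain x where x: "x \<in> K" "\<And>y. y \<in> K \<Longrightarrow> \<phi> x \<le> \<phi> y"
    by (metis lsc_fun_attains_min_compact[OF lsc])
  have "\<phi> x \<le> \<phi> y" if "y \<in> F" for y
  proof (cases "y \<in> K")
    case False
    then have "y \<notin> cball 0 (max R (norm x0))"
      using that unfolding K_def by blast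
    then have "R \<le> norm y"
      by (simp add: not_le)
    then have "ereal r0 < ereal (\<delta> * (norm y)\<^sup>2 - \<alpha> * norm y - \<beta>)"
      using R by simp
    then have "\<phi> x0 < \<phi> y"
      unfolding x0(2) using bound[of y] by (rule less_le_trans)
    moreover have "\<phi> x \<le> \<phi> x0"
      using x(2) x0(1) unfolding K_def by auto
    ultimately show ?thesis by simp
  qed (use x in auto)
  then show ?thesis
    using x(1) unfolding K_def by blast
qed

lemma prox_threshold_quadratic_minorant:
  assumes "ereal lam < prox_threshold f"
  obtains mu x0 M where "lam < mu" "\<And>w. ereal (M - (norm (w - x0))\<^sup>2 / (2 * mu)) \<le> f w"
proof -
  obtain mu x0 where mu: "lam < mu" "moreau_env f mu x0 > -\<infinity>"
    using assms unfolding prox_threshold_def less_Sup_iff by auto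
  then obtain M where M: "ereal M \<le> moreau_env f mu x0"
    using ereal_dense2[OF mu(2)] less_imp_le by blast
  have "ereal (M - (norm (w - x0))\<^sup>2 / (2 * mu)) \<le> f w" for w
  proof -
    have "ereal M \<le> f w + ereal ((norm (w - x0))\<^sup>2 / (2 * mu))"
      using M unfolding moreau_env_def by (meson INF_lower UNIV_I order_trans)
    then show ?thesis
      by (cases "f w") auto
  qed
  with mu(1) show ?thesis using that by blast
qed

lemma quadratically_coercive_add_jfun:
  fixes f :: "'a::real_normed_vector \<Rightarrow> ereal"
  assumes "0 < lam" "lam < mu" and minorant: "\<And>w. ereal (M - (norm (w - x0))\<^sup>2 / (2 * mu)) \<le> f w"
  shows "quadratically_coercive (\<lambda>w. f w + ereal (jfun w / lam))"
  unfolding quadratically_coercive_def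
proof (intro exI conjI allI)
  show "1 / (2 * lam) - 1 / (2 * mu) > 0"
    using assms(1,2) by (simp add: field_simps)
  fix w :: 'a
  define L where "L = (1 / (2 * lam) - 1 / (2 * mu)) * (norm w)\<^sup>2 - norm x0 / mu * norm w
      - ((norm x0)\<^sup>2 / (2 * mu) - M)"
  have "(norm (w - x0))\<^sup>2 \<le> (norm w + norm x0)\<^sup>2"
    using norm_triangle_ineq4[of w x0] by (simp add: power_mono)
  then have "0 \<le> ((norm w + norm x0)\<^sup>2 - (norm (w - x0))\<^sup>2) / (2 * mu)"
    using assms(1,2) by simp
  also have "\<dots> = (M - (norm (w - x0))\<^sup>2 / (2 * mu)) + jfun w / lam - L"
    unfolding L_def jfun_def power2_sum using assms(1,2) by (simp add: field_simps)
  finally have "L \<le> (M - (norm (w - x0))\<^sup>2 / (2 * mu)) + jfun w / lam"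
    by simp
  also have "ereal \<dots> \<le> f w + ereal (jfun w / lam)"
    using add_right_mono[OF minorant[of w], of "ereal (jfun w / lam)"] by simp
  finally show "ereal ((1 / (2 * lam) - 1 / (2 * mu)) * (norm w)\<^sup>2 - norm x0 / mu * norm w
      - ((norm x0)\<^sup>2 / (2 * mu) - M)) \<le> f w + ereal (jfun w / lam)"
    unfolding L_def by simp
qed

section \<open>Convex functions and their subgradients\<close>

definition conv_subdiff :: "('a::real_inner \<Rightarrow> ereal) \<Rightarrow> 'a \<Rightarrow> 'a set" where
  "conv_subdiff h x = {v. \<bar>h x\<bar> \<noteq> \<infinity> \<and> (\<forall>y. h x + ereal (inner v (y - x)) \<le> h y)}"

lemma econvexD:
  assumes "econvex h" "h x \<le> ereal a" "h y \<le> ereal b" "0 \<le> t" "t \<le> 1"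
  shows "h ((1 - t) *\<^sub>R x + t *\<^sub>R y) \<le> ereal ((1 - t) * a + t * b)"
proof -
  have "(x, a) \<in> epigraph h" "(y, b) \<in> epigraph h"
    using assms(2,3) unfolding epigraph_def by auto
  then have "(1 - t) *\<^sub>R (x, a) + t *\<^sub>R (y, b) \<in> epigraph h"
    using assms(1,4,5) unfolding econvex_def by (intro convexD) auto
  then show ?thesis
    unfolding epigraph_def by simp
qed

lemma econvex_affine: "econvex (\<lambda>x. ereal (inner p x + c))"
proof -
  have "epigraph (\<lambda>x. ereal (inner p x + c)) = {z. inner (p, -1) z \<le> - c}"
    by (auto simp: epigraph_def inner_prod_def)
  then show ?thesis
    unfolding econvex_def by (simp add: convex_halfspace_le)
qed

lemma epigraph_conv_fun:
  "epigraph (conv_fun g) = (\<Inter>h\<in>{h. econvex h \<and> (\<forall>y. h y \<le> g y)}. epigraph h)"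
  unfolding epigraph_def conv_fun_def by (auto simp: SUP_le_iff)

lemma econvex_conv_fun: "econvex (conv_fun g)"
  unfolding econvex_def epigraph_conv_fun by (rule convex_INT) (auto simp: econvex_def)

lemma conv_fun_le: "conv_fun g x \<le> g x"
  unfolding conv_fun_def by (rule SUP_least) auto

lemma conv_fun_greatest: "econvex h \<Longrightarrow> (\<And>y. h y \<le> g y) \<Longrightarrow> h x \<le> conv_fun g x"
  unfolding conv_fun_def by (rule SUP_upper) auto

lemma conv_fun_eq_self: "econvex g \<Longrightarrow> conv_fun g = g"
  by (intro ext antisym conv_fun_le conv_fun_greatest) auto

lemma conv_subdiff_subset_reg_subdiff: "conv_subdiff h x \<subseteq> reg_subdiff h x"
proof
  fix v assume v: "v \<in> conv_subdiff h x"
  have "h x + ereal (inner v (y - x) - e * norm (y - x)) \<le> h y" if "e > 0" for e y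
  proof -
    have "h x + ereal (inner v (y - x) - e * norm (y - x)) \<le> h x + ereal (inner v (y - x))"
      using that by (intro add_left_mono) simp
    also have "\<dots> \<le> h y"
      using v unfolding conv_subdiff_def by blast
    finally show ?thesis .
  qed
  then show "v \<in> reg_subdiff h x"
    using v unfolding conv_subdiff_def reg_subdiff_def by (auto intro: exI[of _ 1])
qed

lemma reg_subdiff_subset_lim_subdiff: "reg_subdiff h x \<subseteq> lim_subdiff h x"
  unfolding lim_subdiff_def reg_subdiff_def
  by (auto intro!: exI[of _ "\<lambda>k. x"] exI[of _ "\<lambda>k. v" for v])

lemma econvex_reg_subdiff_estimate:
  assumes cvx: "econvex h" and v: "v \<in> reg_subdiff h x"
    and a: "h x = ereal a" and b: "h y \<le> ereal b" and "e > 0"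
  shows "a + inner v (y - x) - e * norm (y - x) \<le> b"
proof -
  define d where "d = y - x"
  obtain \<delta> where \<delta>: "\<delta> > 0" "\<And>y. norm (y - x) < \<delta> \<Longrightarrow>
                    h x + ereal (inner v (y - x) - e * norm (y - x)) \<le> h y"
    using v \<open>e > 0\<close> unfolding reg_subdiff_def by blast
  have d1: "0 < norm d + 1"
    using norm_ge_zero[of d] by linarith
  then have step: "0 < \<delta> / (2 * (norm d + 1))"
    using \<delta>(1) by simp
  define t where "t = min 1 (\<delta> / (2 * (norm d + 1)))"
  have t: "0 < t" "t \<le> 1" "t * norm d < \<delta>"
  proof -
    show "0 < t" "t \<le> 1"
      unfolding t_def using step by auto
    have "t * norm d \<le> \<delta> / (2 * (norm d + 1)) * (norm d + 1)"
      unfolding t_def using step by (intro mult_mono) auto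
    also have "\<dots> = \<delta> / 2"
      using d1 by (simp add: field_simps)
    finally show "t * norm d < \<delta>"
      using \<delta>(1) by simp
  qed
  \<comment> \<open>Compare the local lower estimate with the convex upper estimate at x + t d.\<close>
  have "ereal (a + (t * inner v d - e * (t * norm d))) \<le> h (x + t *\<^sub>R d)"
    using \<delta>(2)[of "x + t *\<^sub>R d"] t a by simp
  also have "\<dots> \<le> ereal ((1 - t) * a + t * b)"
    using econvexD[OF cvx, of x a y b t] a b t unfolding d_def by (simp add: algebra_simps)
  finally have "t * (a + inner v d - e * norm d) \<le> t * b"
    by (simp add: algebra_simps)
  then show ?thesis
    using t unfolding d_def by simp
qed

lemma reg_subdiff_subset_conv_subdiff:
  assumes "econvex h"
  shows "reg_subdiff h x \<subseteq> conv_subdiff h x"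
proof
  fix v assume v: "v \<in> reg_subdiff h x"
  then obtain a where a: "h x = ereal a"
    unfolding reg_subdiff_def by (cases "h x") auto
  have "ereal (a + inner v (y - x)) \<le> h y" for y
  proof (rule ereal_le_real)
    fix b assume b: "h y \<le> ereal b"
    have d1: "0 < norm (y - x) + 1"
      using norm_ge_zero[of "y - x"] by linarith
    have "a + inner v (y - x) \<le> b"
    proof (rule field_le_epsilon)
      fix e :: real assume "0 < e"
      then have "a + inner v (y - x) - e / (norm (y - x) + 1) * norm (y - x) \<le> b"
        using d1 by (intro econvex_reg_subdiff_estimate[OF assms v a b]) simp
      moreover have "e / (norm (y - x) + 1) * norm (y - x) \<le> e"
        using \<open>0 < e\<close> d1 by (simp add: field_simps)
      ultimately show "a + inner v (y - x) \<le> b + e"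
        by linarith
    qed
    then show "ereal (a + inner v (y - x)) \<le> ereal b"
      by simp
  qed
  then show "v \<in> conv_subdiff h x"
    unfolding conv_subdiff_def using a by simp
qed

lemma lim_subdiff_subset_conv_subdiff:
  assumes "econvex h"
  shows "lim_subdiff h x \<subseteq> conv_subdiff h x"
proof
  fix v assume "v \<in> lim_subdiff h x"
  then obtain X V where fin: "\<bar>h x\<bar> \<noteq> \<infinity>" and X: "X \<longlonglongrightarrow> x" and hX: "(\<lambda>k. h (X k)) \<longlonglongrightarrow> h x"
    and V: "V \<longlonglongrightarrow> v" and sub: "\<And>k. V k \<in> reg_subdiff h (X k)"
    by (auto simp: lim_subdiff_def)
  have "h x + ereal (inner v (y - x)) \<le> h y" for y
  proof (rule LIMSEQ_le_const2)
    show "(\<lambda>k. h (X k) + ereal (inner (V k) (y - X k))) \<longlonglongrightarrow> h x + ereal (inner v (y - x))"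
      using fin hX X V by (intro tendsto_add_ereal tendsto_intros) auto
    show "\<exists>N. \<forall>k\<ge>N. h (X k) + ereal (inner (V k) (y - X k)) \<le> h y"
      using sub reg_subdiff_subset_conv_subdiff[OF assms] unfolding conv_subdiff_def by blast
  qed
  then show "v \<in> conv_subdiff h x"
    using fin unfolding conv_subdiff_def by blast
qed

lemma econvex_if_conv_subdiff_nonempty:
  assumes "convex (edom h)" and "\<And>x. x \<in> edom h \<Longrightarrow> conv_subdiff h x \<noteq> {}"
  shows "econvex h"
  unfolding econvex_def
proof (rule convexI)
  fix P Q :: "'a \<times> real" and u v :: real
  assume P: "P \<in> epigraph h" and Q: "Q \<in> epigraph h" and uv: "0 \<le> u" "0 \<le> v" "u + v = 1"
  obtain x1 t1 x2 t2 where PQ: "P = (x1, t1)" "Q = (x2, t2)"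
    by (cases P, cases Q)
  then have le: "h x1 \<le> ereal t1" "h x2 \<le> ereal t2"
    using P Q by (auto simp: epigraph_def)
  define x where "x = u *\<^sub>R x1 + v *\<^sub>R x2"
  have "x1 \<in> edom h" "x2 \<in> edom h"
    using le unfolding edom_def by (auto intro: le_less_trans)
  then have "x \<in> edom h"
    unfolding x_def using assms(1) uv by (intro convexD)
  then obtain w where "w \<in> conv_subdiff h x"
    using assms(2) by blast
  then obtain c where c: "h x = ereal c" and sg: "\<And>y. h x + ereal (inner w (y - x)) \<le> h y"
    unfolding conv_subdiff_def by (cases "h x") auto
  have "ereal (c + inner w (x1 - x)) \<le> ereal t1" "ereal (c + inner w (x2 - x)) \<le> ereal t2"
    using order_trans[OF sg le(1)] order_trans[OF sg le(2)] c by simp_all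
  then have "u * (c + inner w (x1 - x)) + v * (c + inner w (x2 - x)) \<le> u * t1 + v * t2"
    using uv by (intro add_mono mult_left_mono) auto
  moreover have "u * (c + inner w (x1 - x)) + v * (c + inner w (x2 - x)) = c"
  proof -
    have "u * inner w (x1 - x) + v * inner w (x2 - x) = inner w (x - (u + v) *\<^sub>R x)"
      unfolding x_def by (simp add: algebra_simps)
    also have "\<dots> = 0"
      using uv(3) by simp
    finally have "u * inner w (x1 - x) + v * inner w (x2 - x) = 0" .
    moreover have "u * (c + inner w (x1 - x)) + v * (c + inner w (x2 - x))
        = (u + v) * c + (u * inner w (x1 - x) + v * inner w (x2 - x))"
      by (simp add: algebra_simps)
    ultimately show ?thesis
      using uv(3) by simp
  qed
  ultimately show "u *\<^sub>R P + v *\<^sub>R Q \<in> epigraph h"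
    using c PQ unfolding epigraph_def x_def by simp
qed

lemma maximal_monotone_convex_values:
  assumes "maximal_monotone T"
  shows "convex (T x)"
proof (rule convexI)
  fix u1 u2 and a b :: real
  assume u: "u1 \<in> T x" "u2 \<in> T x" "0 \<le> a" "0 \<le> b" "a + b = 1"
  have mono: "\<And>x y u v. u \<in> T x \<Longrightarrow> v \<in> T y \<Longrightarrow> inner (x - y) (u - v) \<ge> 0"
    and maximal: "\<And>x u. (\<forall>y v. v \<in> T y \<longrightarrow> inner (x - y) (u - v) \<ge> 0) \<Longrightarrow> u \<in> T x"
    using assms unfolding maximal_monotone_def monotone_map_def by blast+
  have "inner (x - y) (a *\<^sub>R u1 + b *\<^sub>R u2 - v) \<ge> 0" if "v \<in> T y" for y v
  proof -
    have "a *\<^sub>R u1 + b *\<^sub>R u2 - v = a *\<^sub>R (u1 - v) + b *\<^sub>R (u2 - v)"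
      using u(5) by (simp add: algebra_simps flip: scaleR_add_left)
    then have "inner (x - y) (a *\<^sub>R u1 + b *\<^sub>R u2 - v)
        = a * inner (x - y) (u1 - v) + b * inner (x - y) (u2 - v)"
      by (simp add: inner_add_right)
    then show ?thesis
      using mono[OF u(1) that] mono[OF u(2) that] u(3,4) by simp
  qed
  then show "a *\<^sub>R u1 + b *\<^sub>R u2 \<in> T x"
    using maximal by blast
qed

text \<open>The easy half of Minty's theorem: v \<in> T (z - v) says that z lies in the range of I + T\<inverse>.\<close>
lemma maximal_monotone_if_minty:
  assumes "monotone_map T" and "\<And>z. \<exists>v. v \<in> T (z - v)"
  shows "maximal_monotone T"
  unfolding maximal_monotone_def
proof (intro conjI allI impI assms(1))
  fix x u assume related: "\<forall>y v. v \<in> T y \<longrightarrow> 0 \<le> inner (x - y) (u - v)"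
  obtain v where v: "v \<in> T (x + u - v)"
    using assms(2)[of "x + u"] by blast
  have "0 \<le> inner (x - (x + u - v)) (u - v)"
    using related v by blast
  also have "\<dots> = - (norm (u - v))\<^sup>2"
    by (simp add: power2_norm_eq_inner algebra_simps inner_commute)
  finally have "u = v" by simp
  then show "u \<in> T x"
    using v by simp
qed

section \<open>Proximal subgradients and the proximal map\<close>

lemma ereal_add_le_add_iff: "e' + ereal b \<le> e + ereal a \<longleftrightarrow> e' + ereal (b - a) \<le> e"
  by (cases e; cases e') auto

lemma prox_subdiff_iff_shifted:
  fixes f :: "'a::real_inner \<Rightarrow> ereal"
  assumes "lam > 0"
  shows "v \<in> prox_subdiff lam f x \<longleftrightarrow> x \<in> edom f \<and>
    (\<forall>y. f x + ereal ((norm (x - z))\<^sup>2 / (2 * lam) + inner (v + (1 / lam) *\<^sub>R (x - z)) (y - x))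
         \<le> f y + ereal ((norm (y - z))\<^sup>2 / (2 * lam)))"
proof -
  have "(norm (x - z))\<^sup>2 / (2 * lam) + inner (v + (1 / lam) *\<^sub>R (x - z)) (y - x)
      - (norm (y - z))\<^sup>2 / (2 * lam) = inner v (y - x) - (norm (y - x))\<^sup>2 / (2 * lam)" for y
  proof -
    have "(norm (y - z))\<^sup>2 = (norm (y - x))\<^sup>2 + 2 * inner (y - x) (x - z) + (norm (x - z))\<^sup>2"
      using dot_norm[of "y - x" "x - z"] by simp
    moreover have "inner (v + (1 / lam) *\<^sub>R (x - z)) (y - x) = inner v (y - x) + inner (y - x) (x - z) / lam"
      by (simp add: inner_add_left) (simp add: inner_commute)
    ultimately show ?thesis
      using assms by (simp only:) (simp add: field_simps)
  qed
  then show ?thesis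
    unfolding prox_subdiff_def by (simp only: mem_Collect_eq ereal_add_le_add_iff)
qed

lemma prox_subdiff_iff_prox_map:
  assumes "lam > 0" and "x \<in> edom f"
  shows "v \<in> prox_subdiff lam f x \<longleftrightarrow> x \<in> prox_map f lam (x + lam *\<^sub>R v)"
  using assms unfolding prox_subdiff_iff_shifted[OF assms(1), where z = "x + lam *\<^sub>R v"] prox_map_def
  by simp

lemma prox_subdiff_iff_conv_subdiff:
  assumes "lam > 0" and "f x \<noteq> -\<infinity>"
  shows "v \<in> prox_subdiff lam f x
    \<longleftrightarrow> v + (1 / lam) *\<^sub>R x \<in> conv_subdiff (\<lambda>x. f x + ereal (jfun x / lam)) x"
proof -
  have "x \<in> edom f \<longleftrightarrow> \<bar>f x + ereal (jfun x / lam)\<bar> \<noteq> \<infinity>"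
    using assms(2) unfolding edom_def by (cases "f x") auto
  then show ?thesis
    unfolding prox_subdiff_iff_shifted[OF assms(1), where z = 0] conv_subdiff_def
    by (simp add: add.assoc jfun_def)
qed

lemma prox_subdiff_subset_reg_subdiff:
  assumes "lam > 0" and "f x \<noteq> -\<infinity>"
  shows "prox_subdiff lam f x \<subseteq> reg_subdiff f x"
proof
  fix v assume v: "v \<in> prox_subdiff lam f x"
  then have fin: "\<bar>f x\<bar> \<noteq> \<infinity>"
    using assms(2) unfolding prox_subdiff_def edom_def by auto
  have "\<exists>d>0. \<forall>y. norm (y - x) < d \<longrightarrow> f x + ereal (inner v (y - x) - e * norm (y - x)) \<le> f y"
    if "e > 0" for e
  proof (intro exI[of _ "2 * lam * e"] conjI allI impI)
    show "2 * lam * e > 0"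
      using assms(1) that by simp
    fix y assume y: "norm (y - x) < 2 * lam * e"
    have "(norm (y - x))\<^sup>2 \<le> (2 * lam * e) * norm (y - x)"
      unfolding power2_eq_square using y by (intro mult_right_mono) auto
    then have "f x + ereal (inner v (y - x) - e * norm (y - x))
        \<le> f x + ereal (inner v (y - x) - (norm (y - x))\<^sup>2 / (2 * lam))"
      using assms(1) by (intro add_left_mono) (simp add: field_simps)
    also have "\<dots> \<le> f y"
      using v unfolding prox_subdiff_def by blast
    finally show "f x + ereal (inner v (y - x) - e * norm (y - x)) \<le> f y" .
  qed
  then show "v \<in> reg_subdiff f x"
    using fin unfolding reg_subdiff_def by blast
qed

lemma jfun_ge_linearization: "jfun x + inner x (y - x) \<le> jfun y"
proof -
  have "jfun y - (jfun x + inner x (y - x)) = (norm (y - x))\<^sup>2 / 2"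
    unfolding jfun_def by (simp add: power2_norm_eq_inner algebra_simps inner_commute)
  moreover have "0 \<le> (norm (y - x))\<^sup>2 / 2"
    by simp
  ultimately show ?thesis
    by linarith
qed

lemma reg_subdiff_add_jfun:
  assumes "lam > 0" and v: "v \<in> reg_subdiff f x"
  shows "v + (1 / lam) *\<^sub>R x \<in> reg_subdiff (\<lambda>x. f x + ereal (jfun x / lam)) x"
proof -
  from v have fin: "\<bar>f x\<bar> \<noteq> \<infinity>" and local: "\<And>e. e > 0 \<Longrightarrow> \<exists>d>0. \<forall>y. norm (y - x) < d \<longrightarrow>
          f x + ereal (inner v (y - x) - e * norm (y - x)) \<le> f y"
    unfolding reg_subdiff_def by auto
  have lin: "jfun x / lam + inner ((1 / lam) *\<^sub>R x) (y - x) \<le> jfun y / lam" for y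
    using divide_right_mono[OF jfun_ge_linearization[of x y], of lam] assms(1)
    by (simp add: add_divide_distrib)
  have "f x + ereal (jfun x / lam) + ereal (inner (v + (1 / lam) *\<^sub>R x) (y - x) - e * norm (y - x))
      \<le> f y + ereal (jfun y / lam)" if "f x + ereal (inner v (y - x) - e * norm (y - x)) \<le> f y" for y e
  proof -
    have "f x + ereal (jfun x / lam) + ereal (inner (v + (1 / lam) *\<^sub>R x) (y - x) - e * norm (y - x))
        = f x + ereal (inner v (y - x) - e * norm (y - x))
          + ereal (jfun x / lam + inner ((1 / lam) *\<^sub>R x) (y - x))"
      by (simp add: algebra_simps)
    also have "\<dots> \<le> f y + ereal (jfun y / lam)"
      using that lin[of y] by (intro add_mono) auto
    finally show ?thesis .
  qed
  then have "\<exists>d>0. \<forall>y. norm (y - x) < d \<longrightarrow> f x + ereal (jfun x / lam)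
      + ereal (inner (v + (1 / lam) *\<^sub>R x) (y - x) - e * norm (y - x)) \<le> f y + ereal (jfun y / lam)"
    if "e > 0" for e
    using local[OF that] by blast
  moreover have "\<bar>f x + ereal (jfun x / lam)\<bar> \<noteq> \<infinity>"
    using fin by (cases "f x") auto
  ultimately show ?thesis
    unfolding reg_subdiff_def by blast
qed

lemma lim_subdiff_add_jfun:
  assumes "lam > 0" and "v \<in> lim_subdiff f x"
  shows "v + (1 / lam) *\<^sub>R x \<in> lim_subdiff (\<lambda>x. f x + ereal (jfun x / lam)) x"
proof -
  obtain X V where fin: "\<bar>f x\<bar> \<noteq> \<infinity>" and X: "X \<longlonglongrightarrow> x" and fX: "(\<lambda>k. f (X k)) \<longlonglongrightarrow> f x"
    and V: "V \<longlonglongrightarrow> v" and sub: "\<And>k. V k \<in> reg_subdiff f (X k)"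
    using assms(2) by (auto simp: lim_subdiff_def)
  have "(\<lambda>k. f (X k) + ereal (jfun (X k) / lam)) \<longlonglongrightarrow> f x + ereal (jfun x / lam)"
    using fin fX X assms(1) unfolding jfun_def by (intro tendsto_add_ereal tendsto_intros) auto
  moreover have "(\<lambda>k. V k + (1 / lam) *\<^sub>R X k) \<longlonglongrightarrow> v + (1 / lam) *\<^sub>R x"
    using X V by (intro tendsto_intros)
  moreover have "\<bar>f x + ereal (jfun x / lam)\<bar> \<noteq> \<infinity>"
    using fin by (cases "f x") auto
  ultimately show ?thesis
    unfolding lim_subdiff_def using X reg_subdiff_add_jfun[OF assms(1) sub] by blast
qed

lemma lim_subdiff_subset_prox_subdiff:
  assumes "lam > 0" and "econvex (\<lambda>x. f x + ereal (jfun x / lam))"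
  shows "lim_subdiff f x \<subseteq> prox_subdiff lam f x"
proof
  fix v assume v: "v \<in> lim_subdiff f x"
  then have "f x \<noteq> -\<infinity>"
    unfolding lim_subdiff_def by auto
  moreover have "v + (1 / lam) *\<^sub>R x \<in> conv_subdiff (\<lambda>x. f x + ereal (jfun x / lam)) x"
    using lim_subdiff_subset_conv_subdiff[OF assms(2)] lim_subdiff_add_jfun[OF assms(1) v] by blast
  ultimately show "v \<in> prox_subdiff lam f x"
    using prox_subdiff_iff_conv_subdiff[OF assms(1)] by blast
qed

lemma prox_map_eq_minimizers: "prox_map f lam z = minimizers (\<lambda>y. f y + ereal ((norm (y - z))\<^sup>2 / (2 * lam)))"
  unfolding prox_map_def minimizers_def ..

lemma prox_map_eq_minimizers_tilted:
  assumes "lam > 0"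
  shows "prox_map f lam (lam *\<^sub>R p) = minimizers (\<lambda>y. f y + ereal (jfun y / lam) + ereal (- inner p y))"
proof -
  have shift: "(norm (y - lam *\<^sub>R p))\<^sup>2 / (2 * lam) = (jfun y / lam - inner p y) + lam * (norm p)\<^sup>2 / 2" for y
    using assms dot_norm[of y "- lam *\<^sub>R p"]
    by (simp add: jfun_def field_simps power2_eq_square inner_commute)
  have "e1 + ereal (A + C) \<le> e2 + ereal (B + C) \<longleftrightarrow> e1 + ereal A \<le> e2 + ereal B" for e1 e2 :: ereal and A B C
    by (cases e1; cases e2) auto
  then show ?thesis
    unfolding prox_map_eq_minimizers minimizers_def shift by (simp add: add.assoc)
qed

lemma edom_add_ereal: "edom (\<lambda>x. f x + ereal (h x)) = edom f"
  unfolding edom_def by auto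

lemma prox_map_subset_edom:
  assumes "edom f \<noteq> {}"
  shows "prox_map f lam z \<subseteq> edom f"
proof
  fix y assume y: "y \<in> prox_map f lam z"
  obtain w where "f w < \<infinity>"
    using assms unfolding edom_def by auto
  moreover have "f y + ereal ((norm (y - z))\<^sup>2 / (2 * lam)) \<le> f w + ereal ((norm (w - z))\<^sup>2 / (2 * lam))"
    using y unfolding prox_map_def by blast
  ultimately show "y \<in> edom f"
    unfolding edom_def by auto
qed

lemma prox_map_monotone:
  fixes f :: "'a::real_inner \<Rightarrow> ereal"
  assumes "lam > 0" and "\<And>w. f w \<noteq> -\<infinity>" and "edom f \<noteq> {}"
  shows "monotone_map (prox_map f lam)"
  unfolding monotone_map_def
proof (intro allI impI)
  fix z1 z2 y1 y2 assume y1: "y1 \<in> prox_map f lam z1" and y2: "y2 \<in> prox_map f lam z2"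
  obtain r1 r2 where r: "f y1 = ereal r1" "f y2 = ereal r2"
    using prox_map_subset_edom[OF assms(3)] y1 y2 assms(2)[of y1] assms(2)[of y2]
    unfolding edom_def by (cases "f y1"; cases "f y2") auto
  have "f y1 + ereal ((norm (y1 - z1))\<^sup>2 / (2 * lam)) \<le> f y2 + ereal ((norm (y2 - z1))\<^sup>2 / (2 * lam))"
    "f y2 + ereal ((norm (y2 - z2))\<^sup>2 / (2 * lam)) \<le> f y1 + ereal ((norm (y1 - z2))\<^sup>2 / (2 * lam))"
    using y1 y2 unfolding prox_map_def by blast+
  then have "((norm (y1 - z1))\<^sup>2 + (norm (y2 - z2))\<^sup>2) / (2 * lam)
      \<le> ((norm (y2 - z1))\<^sup>2 + (norm (y1 - z2))\<^sup>2) / (2 * lam)"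
    using r by (simp add: add_divide_distrib)
  then have "(norm (y1 - z1))\<^sup>2 + (norm (y2 - z2))\<^sup>2 \<le> (norm (y2 - z1))\<^sup>2 + (norm (y1 - z2))\<^sup>2"
    using assms(1) by (simp add: divide_le_cancel)
  moreover have "(norm (y2 - z1))\<^sup>2 + (norm (y1 - z2))\<^sup>2 - (norm (y1 - z1))\<^sup>2 - (norm (y2 - z2))\<^sup>2
      = 2 * inner (z1 - z2) (y1 - y2)"
    by (simp add: power2_norm_eq_inner inner_diff_left inner_diff_right inner_commute)
  ultimately show "inner (z1 - z2) (y1 - y2) \<ge> 0"
    by linarith
qed

lemma prox_map_nonempty:
  fixes f :: "'a::euclidean_space \<Rightarrow> ereal"
  assumes "lam > 0" and "lsc_fun f" and "quadratically_coercive f"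
  shows "prox_map f lam z \<noteq> {}"
proof -
  have lsc: "lsc_fun (\<lambda>y. f y + ereal ((norm (y - z))\<^sup>2 / (2 * lam)))"
    using assms(1,2) by (intro lsc_fun_add_continuous continuous_intros) auto
  have coercive: "quadratically_coercive (\<lambda>y. f y + ereal ((norm (y - z))\<^sup>2 / (2 * lam)))"
    using assms(1) by (intro quadratically_coercive_add[OF assms(3), of 0 0]) simp
  obtain x where "\<forall>y\<in>UNIV. f x + ereal ((norm (x - z))\<^sup>2 / (2 * lam))
      \<le> f y + ereal ((norm (y - z))\<^sup>2 / (2 * lam))"
    using lsc_coercive_attains_min[OF lsc coercive closed_UNIV UNIV_not_empty] by blast
  then show ?thesis
    unfolding prox_map_def by blast
qed

lemma prox_map_minty:
  fixes f :: "'a::euclidean_space \<Rightarrow> ereal" and lam :: real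
  defines "g \<equiv> \<lambda>x. f x + ereal (jfun x / lam)"
  assumes lam: "lam > 0" and "lsc_fun f" and coercive: "quadratically_coercive g"
    and "econvex g" and "edom f \<noteq> {}"
  shows "\<exists>v. v \<in> prox_map f lam (z - v)"
proof -
  have not_MInf: "f x \<noteq> -\<infinity>" for x
    using quadratically_coercive_not_MInf[OF coercive, of x] unfolding g_def by auto
  have "lsc_fun g"
    unfolding g_def using \<open>lsc_fun f\<close> by (rule lsc_fun_add_jfun)
  then obtain v where v: "v \<in> prox_map g lam z"
    using prox_map_nonempty[OF lam _ coercive] by blast
  have "edom g \<noteq> {}"
    unfolding g_def edom_add_ereal by fact
  then have "v \<in> edom g"
    using prox_map_subset_edom v by blast
  then have "v \<in> edom f"
    unfolding g_def edom_add_ereal .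
  have "v + lam *\<^sub>R ((1 / lam) *\<^sub>R (z - v)) = z"
    using lam by simp
  \<comment> \<open>v minimises g + j/lam - <z/lam, .>, so by convexity z/lam - v/lam is a subgradient of g at v.\<close>
  then have "(1 / lam) *\<^sub>R (z - v) \<in> prox_subdiff lam g v"
    using prox_subdiff_iff_prox_map[OF lam \<open>v \<in> edom g\<close>] v by simp
  then have "(1 / lam) *\<^sub>R (z - v) \<in> conv_subdiff g v"
    using prox_subdiff_subset_reg_subdiff[OF lam] reg_subdiff_subset_conv_subdiff[OF \<open>econvex g\<close>]
      quadratically_coercive_not_MInf[OF coercive] by blast
  then have "(1 / lam) *\<^sub>R (z - v) - (1 / lam) *\<^sub>R v \<in> prox_subdiff lam f v"
    unfolding g_def using prox_subdiff_iff_conv_subdiff[where f = f and x = v, OF lam not_MInf] by simp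
  with \<open>v \<in> edom f\<close> have "v \<in> prox_map f lam (v + lam *\<^sub>R ((1 / lam) *\<^sub>R (z - v) - (1 / lam) *\<^sub>R v))"
    using prox_subdiff_iff_prox_map[OF lam] by blast
  then show ?thesis
    using lam by (auto simp: algebra_simps)
qed

lemma maximal_monotone_prox_map:
  fixes f :: "'a::euclidean_space \<Rightarrow> ereal" and lam :: real
  assumes "lam > 0" and "lsc_fun f" and "quadratically_coercive (\<lambda>x. f x + ereal (jfun x / lam))"
    and "econvex (\<lambda>x. f x + ereal (jfun x / lam))" and "edom f \<noteq> {}"
  shows "maximal_monotone (prox_map f lam)"
proof (rule maximal_monotone_if_minty)
  have "f x \<noteq> -\<infinity>" for x
    using quadratically_coercive_not_MInf[OF assms(3), of x] by auto
  then show "monotone_map (prox_map f lam)"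
    by (rule prox_map_monotone[OF assms(1) _ assms(5)])
  show "\<exists>v. v \<in> prox_map f lam (z - v)" for z
    using prox_map_minty[OF assms] .
qed

section \<open>Subgradients of the convex hull\<close>

lemma ex_pos_factor_le:
  fixes \<eta> K :: real
  assumes "\<eta> > 0" and "K \<ge> 0"
  shows "\<exists>\<epsilon>>0. \<epsilon> \<le> 1 \<and> \<epsilon> * K \<le> \<eta>"
proof (intro exI conjI)
  show "0 < min 1 (\<eta> / (K + 1))" "min 1 (\<eta> / (K + 1)) \<le> 1"
    using assms by auto
  have "min 1 (\<eta> / (K + 1)) * K \<le> \<eta> / (K + 1) * (K + 1)"
    using assms by (intro mult_mono) auto
  then show "min 1 (\<eta> / (K + 1)) * K \<le> \<eta>"
    using assms(2) by simp
qed

lemma lsc_coercive_gap_off_minimizers: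
  fixes \<phi> :: "'a::euclidean_space \<Rightarrow> ereal"
  assumes "lsc_fun \<phi>" "quadratically_coercive \<phi>" and lower: "\<And>w. ereal m \<le> \<phi> w"
    and "closed F" "F \<noteq> {}" and disjoint: "F \<inter> minimizers \<phi> = {}"
  shows "\<exists>\<eta>>0. \<forall>w\<in>F. ereal (m + \<eta>) \<le> \<phi> w"
proof -
  obtain w1 where w1: "w1 \<in> F" "\<forall>w\<in>F. \<phi> w1 \<le> \<phi> w"
    using lsc_coercive_attains_min[OF assms(1,2,4,5)] by blast
  have gap: "ereal m < \<phi> w1"
  proof (rule ccontr)
    assume "\<not> ereal m < \<phi> w1"
    then have "\<phi> w1 \<le> \<phi> y" for y
      using lower[of y] by (simp add: not_less)
    then have "w1 \<in> minimizers \<phi>"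
      unfolding minimizers_def by blast
    then show False
      using disjoint w1(1) by blast
  qed
  obtain r where r: "ereal m < ereal r" "ereal r < \<phi> w1"
    using ereal_dense2[OF gap] by blast
  have "\<forall>w\<in>F. ereal (m + (r - m)) \<le> \<phi> w"
    using r(2) w1(2) by (auto dest: less_le_trans intro: less_imp_le)
  moreover have "r - m > 0"
    using r(1) by simp
  ultimately show ?thesis by blast
qed

lemma tilted_affine_minorant:
  fixes \<phi> :: "'a::real_inner \<Rightarrow> ereal"
  assumes "quadratically_coercive \<phi>" and lower: "\<And>w. ereal m \<le> \<phi> w" and "\<eta> > 0"
    and halfspace: "\<And>w. inner a w \<le> b \<Longrightarrow> ereal (m + \<eta>) \<le> \<phi> w"
  shows "\<exists>\<epsilon>>0. \<forall>w. ereal (m + \<epsilon> * (b - inner a w)) \<le> \<phi> w"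
proof -
  obtain \<delta> \<alpha> \<beta> where \<delta>: "\<delta> > 0" and bound: "\<And>x. ereal (\<delta> * (norm x)\<^sup>2 - \<alpha> * norm x - \<beta>) \<le> \<phi> x"
    using assms(1) unfolding quadratically_coercive_def by blast
  obtain R where R: "R \<ge> 0" "\<And>t. t \<ge> R \<Longrightarrow> m + \<bar>b\<bar> < \<delta> * t\<^sup>2 - (\<alpha> + norm a) * t - \<beta>"
    using quadratic_eventually_greater[OF \<delta>] by blast
  obtain \<epsilon> where \<epsilon>: "0 < \<epsilon>" "\<epsilon> \<le> 1" "\<epsilon> * (\<bar>b\<bar> + norm a * R) \<le> \<eta>"
    using ex_pos_factor_le[OF \<open>\<eta> > 0\<close>, of "\<bar>b\<bar> + norm a * R"] R(1) by auto
  \<comment> \<open>Near the halfspace the gap \<eta> absorbs the tilt, far away the quadratic growth does.\<close>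
  have "ereal (m + \<epsilon> * (b - inner a w)) \<le> \<phi> w" for w
  proof -
    have cs: "b - inner a w \<le> \<bar>b\<bar> + norm a * norm w"
      using Cauchy_Schwarz_ineq2[of a w] by linarith
    consider (outside) "b \<le> inner a w" | (near) "inner a w < b" "norm w \<le> R"
      | (far) "inner a w < b" "R < norm w"
      by linarith
    then show ?thesis
    proof cases
      case outside
      then have "ereal (m + \<epsilon> * (b - inner a w)) \<le> ereal m"
        using \<epsilon>(1) by (simp add: mult_nonneg_nonpos)
      then show ?thesis
        using lower[of w] by (rule order_trans)
    next
      case near
      have "norm a * norm w \<le> norm a * R"
        using near(2) by (simp add: mult_left_mono)
      then have "\<epsilon> * (b - inner a w) \<le> \<epsilon> * (\<bar>b\<bar> + norm a * R)"
        using cs \<epsilon>(1) by (intro mult_left_mono) auto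
      then have "ereal (m + \<epsilon> * (b - inner a w)) \<le> ereal (m + \<eta>)"
        using \<epsilon>(3) by simp
      also have "\<dots> \<le> \<phi> w"
        using halfspace[of w] near(1) by simp
      finally show ?thesis .
    next
      case far
      have "\<epsilon> * (b - inner a w) \<le> b - inner a w"
        using far(1) \<epsilon>(2) by (simp add: mult_left_le_one_le)
      moreover have "m + \<bar>b\<bar> < \<delta> * (norm w)\<^sup>2 - (\<alpha> + norm a) * norm w - \<beta>"
        using R(2) far(2) by simp
      ultimately have "ereal (m + \<epsilon> * (b - inner a w)) \<le> ereal (\<delta> * (norm w)\<^sup>2 - \<alpha> * norm w - \<beta>)"
        using cs by (simp add: algebra_simps)
      then show ?thesis
        using bound[of w] by (rule order_trans)
    qed
  qed
  then show ?thesis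
    using \<epsilon>(1) by blast
qed

lemma tilted_minorant_off_minimizers:
  fixes \<phi> :: "'a::euclidean_space \<Rightarrow> ereal"
  assumes "lsc_fun \<phi>" and coercive: "quadratically_coercive \<phi>" and lower: "\<And>w. ereal m \<le> \<phi> w"
    and "convex (minimizers \<phi>)" and "x \<notin> minimizers \<phi>"
  shows "\<exists>a b \<epsilon>. inner a x < b \<and> \<epsilon> > 0 \<and> (\<forall>w. ereal (m + \<epsilon> * (b - inner a w)) \<le> \<phi> w)"
proof -
  obtain a b where ab: "inner a x < b" "\<And>s. s \<in> minimizers \<phi> \<Longrightarrow> b < inner a s"
    using separating_hyperplane_closed_point[OF assms(4) lsc_fun_closed_minimizers[OF assms(1)] assms(5)]
    by blast
  define F where "F = {w. inner a w \<le> b}"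
  have "closed F"
    unfolding F_def by (rule closed_halfspace_le)
  moreover have "x \<in> F"
    unfolding F_def using ab(1) by simp
  then have "F \<noteq> {}"
    by blast
  moreover have "F \<inter> minimizers \<phi> = {}"
    unfolding F_def by (auto dest!: ab(2))
  ultimately obtain \<eta> where "\<eta> > 0" "\<forall>w\<in>F. ereal (m + \<eta>) \<le> \<phi> w"
    using lsc_coercive_gap_off_minimizers[OF assms(1) coercive lower] by blast
  then obtain \<epsilon> where "\<epsilon> > 0" "\<forall>w. ereal (m + \<epsilon> * (b - inner a w)) \<le> \<phi> w"
    using tilted_affine_minorant[OF coercive lower, of \<eta> a b] unfolding F_def by blast
  with ab(1) show ?thesis
    by blast
qed

lemma conv_fun_subgradient_mem_minimizers:
  fixes g :: "'a::euclidean_space \<Rightarrow> ereal" and p :: 'a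
  defines "\<phi> \<equiv> \<lambda>w. g w + ereal (- inner p w)"
  assumes "lsc_fun g" and "quadratically_coercive g"
    and p: "p \<in> conv_subdiff (conv_fun g) x" and "convex (minimizers \<phi>)"
  shows "x \<in> minimizers \<phi>"
proof (rule ccontr)
  assume "x \<notin> minimizers \<phi>"
  obtain \<gamma> where \<gamma>: "conv_fun g x = ereal \<gamma>"
    and sg: "\<And>y. conv_fun g x + ereal (inner p (y - x)) \<le> conv_fun g y"
    using p unfolding conv_subdiff_def by (cases "conv_fun g x") auto
  define m where "m = \<gamma> - inner p x"
  have lower: "ereal m \<le> \<phi> w" for w
  proof -
    have "ereal (\<gamma> + inner p (w - x)) \<le> g w"
      using order_trans[OF sg conv_fun_le] \<gamma> by simp
    then show ?thesis
      unfolding \<phi>_def m_def by (cases "g w") (auto simp: inner_diff_right)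
  qed
  have "lsc_fun \<phi>"
    unfolding \<phi>_def using assms(2) by (intro lsc_fun_add_continuous continuous_intros)
  moreover have "quadratically_coercive \<phi>"
    unfolding \<phi>_def using Cauchy_Schwarz_ineq2[of p]
    by (intro quadratically_coercive_add[OF assms(3), of "norm p" 0]) (simp add: abs_le_iff)
  \<comment> \<open>The tilted affine minorant of g exceeds conv g at x.\<close>
  ultimately obtain a b \<epsilon> where ab: "inner a x < b" "\<epsilon> > 0"
    and tilted: "\<And>w. ereal (m + \<epsilon> * (b - inner a w)) \<le> \<phi> w"
    using tilted_minorant_off_minimizers[OF _ _ lower assms(5) \<open>x \<notin> minimizers \<phi>\<close>] by blast
  define h where "h = (\<lambda>w. ereal (inner (p - \<epsilon> *\<^sub>R a) w + (m + \<epsilon> * b)))"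
  have "h w \<le> g w" for w
  proof -
    have "h w = ereal (m + \<epsilon> * (b - inner a w) + inner p w)"
      unfolding h_def by (simp add: algebra_simps)
    then show ?thesis
      using tilted[of w] unfolding \<phi>_def by (cases "g w") auto
  qed
  then have "h x \<le> conv_fun g x"
    by (intro conv_fun_greatest) (auto simp: h_def econvex_affine)
  moreover have "h x = ereal (\<gamma> + \<epsilon> * (b - inner a x))"
    unfolding h_def m_def by (simp add: algebra_simps)
  moreover have "\<epsilon> * (b - inner a x) > 0"
    using ab by simp
  ultimately show False
    using \<gamma> by simp
qed

lemma prox_subdiff_nonempty_if_convex_prox_map:
  fixes f :: "'a::euclidean_space \<Rightarrow> ereal" and lam :: real
  defines "g \<equiv> \<lambda>x. f x + ereal (jfun x / lam)"
  assumes lam: "lam > 0" and "lsc_fun f" and "quadratically_coercive g"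
    and convex_prox: "\<And>z. convex (prox_map f lam z)"
    and dom: "subdiff_dom (lim_subdiff (conv_fun g)) = edom f"
  shows "\<forall>x\<in>edom f. prox_subdiff lam f x \<noteq> {}"
proof
  fix x assume x: "x \<in> edom f"
  then obtain p where "p \<in> lim_subdiff (conv_fun g) x"
    unfolding dom[symmetric] subdiff_dom_def by blast
  then have "p \<in> conv_subdiff (conv_fun g) x"
    using lim_subdiff_subset_conv_subdiff[OF econvex_conv_fun] by blast
  moreover have "lsc_fun g"
    unfolding g_def using \<open>lsc_fun f\<close> by (rule lsc_fun_add_jfun)
  moreover have "minimizers (\<lambda>w. g w + ereal (- inner p w)) = prox_map f lam (lam *\<^sub>R p)"
    unfolding g_def prox_map_eq_minimizers_tilted[OF lam] ..
  ultimately have "x \<in> prox_map f lam (lam *\<^sub>R p)"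
    using conv_fun_subgradient_mem_minimizers[of g p x] assms(4) convex_prox by simp
  moreover have "x + lam *\<^sub>R (p - (1 / lam) *\<^sub>R x) = lam *\<^sub>R p"
    using lam by (simp add: algebra_simps)
  ultimately have "p - (1 / lam) *\<^sub>R x \<in> prox_subdiff lam f x"
    using prox_subdiff_iff_prox_map[OF lam x] by simp
  then show "prox_subdiff lam f x \<noteq> {}"
    by blast
qed

lemma subdiff_dom_lim_subdiff_subset: "subdiff_dom (lim_subdiff h) \<subseteq> edom h"
  unfolding subdiff_dom_def lim_subdiff_def edom_def by auto

lemma subdiff_dom_prox_subdiff_eq_iff:
  "subdiff_dom (prox_subdiff lam f) = edom f \<longleftrightarrow> (\<forall>x\<in>edom f. prox_subdiff lam f x \<noteq> {})"
  unfolding subdiff_dom_def prox_subdiff_def by blast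

lemma conv_map_eq_self_iff: "T = conv_map T \<longleftrightarrow> (\<forall>x. convex (T x))"
  unfolding conv_map_def by (metis convex_convex_hull convex_hull_eq)

lemma econvex_if_prox_subdiff_nonempty:
  assumes "lam > 0" and "\<And>x. f x \<noteq> -\<infinity>" and "convex (edom f)"
    and "\<forall>x\<in>edom f. prox_subdiff lam f x \<noteq> {}"
  shows "econvex (\<lambda>x. f x + ereal (jfun x / lam))"
proof (rule econvex_if_conv_subdiff_nonempty)
  show "convex (edom (\<lambda>x. f x + ereal (jfun x / lam)))"
    using assms(3) by (simp add: edom_add_ereal)
  fix x assume "x \<in> edom (\<lambda>x. f x + ereal (jfun x / lam))"
  then obtain v where "v \<in> prox_subdiff lam f x"
    using assms(4) by (auto simp: edom_add_ereal)
  then show "conv_subdiff (\<lambda>x. f x + ereal (jfun x / lam)) x \<noteq> {}"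
    using prox_subdiff_iff_conv_subdiff[where f = f and x = x, OF assms(1,2)] by blast
qed

lemma prox_subdiff_eq_lim_subdiff:
  assumes "lam > 0" and "\<And>x. f x \<noteq> -\<infinity>" and "econvex (\<lambda>x. f x + ereal (jfun x / lam))"
  shows "prox_subdiff lam f = lim_subdiff f"
proof (intro ext equalityI)
  fix x
  show "prox_subdiff lam f x \<subseteq> lim_subdiff f x"
    using prox_subdiff_subset_reg_subdiff[where f = f and x = x, OF assms(1,2)]
      reg_subdiff_subset_lim_subdiff by blast
  show "lim_subdiff f x \<subseteq> prox_subdiff lam f x"
    by (rule lim_subdiff_subset_prox_subdiff[OF assms(1,3)])
qed

lemma subdiff_dom_lim_subdiff_conv_fun:
  assumes "lam > 0" and "\<And>x. f x \<noteq> -\<infinity>" and convex: "econvex (\<lambda>x. f x + ereal (jfun x / lam))"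
    and "\<forall>x\<in>edom f. prox_subdiff lam f x \<noteq> {}"
  shows "subdiff_dom (lim_subdiff (conv_fun (\<lambda>x. f x + ereal (jfun x / lam)))) = edom f"
  unfolding conv_fun_eq_self[OF convex]
proof
  show "subdiff_dom (lim_subdiff (\<lambda>x. f x + ereal (jfun x / lam))) \<subseteq> edom f"
    using subdiff_dom_lim_subdiff_subset[of "\<lambda>x. f x + ereal (jfun x / lam)"]
    unfolding edom_add_ereal .
  show "edom f \<subseteq> subdiff_dom (lim_subdiff (\<lambda>x. f x + ereal (jfun x / lam)))"
  proof
    fix x assume "x \<in> edom f"
    then obtain v where "v \<in> prox_subdiff lam f x"
      using assms(4) by blast
    then have "v + (1 / lam) *\<^sub>R x \<in> lim_subdiff (\<lambda>x. f x + ereal (jfun x / lam)) x"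
      using prox_subdiff_iff_conv_subdiff[where f = f and x = x, OF assms(1,2)]
        conv_subdiff_subset_reg_subdiff reg_subdiff_subset_lim_subdiff by blast
    then show "x \<in> subdiff_dom (lim_subdiff (\<lambda>x. f x + ereal (jfun x / lam)))"
      unfolding subdiff_dom_def by blast
  qed
qed

theorem mainTheorem6:
  fixes f :: "'a::euclidean_space \<Rightarrow> ereal" and lam :: real
  assumes "proper_fun f" and "lsc_fun f" and "prox_bounded f"
    and "prox_threshold f > 0"
    and "0 < lam" and "ereal lam < prox_threshold f"
    and "convex (edom f)"
  defines "g \<equiv> (\<lambda>x. f x + ereal (jfun x / lam))"
  defines "A \<equiv> (\<forall>x\<in>edom f. prox_subdiff lam f x \<noteq> {})"
    and "B \<equiv> (prox_map f lam = conv_map (prox_map f lam) \<and>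
              subdiff_dom (lim_subdiff (conv_fun g)) = edom f)"
    and "C \<equiv> (maximal_monotone (prox_map f lam) \<and>
              subdiff_dom (lim_subdiff (conv_fun g)) = edom f)"
    and "D \<equiv> (econvex g \<and> subdiff_dom (lim_subdiff f) = edom f)"
    and "E \<equiv> (prox_subdiff lam f = lim_subdiff f \<and> subdiff_dom (lim_subdiff f) = edom f)"
  shows "(A \<longleftrightarrow> B) \<and> (A \<longleftrightarrow> C) \<and> (A \<longleftrightarrow> D) \<and> (A \<longleftrightarrow> E)"
proof -
  note lam = \<open>0 < lam\<close>
  have not_MInf: "\<And>x. f x \<noteq> -\<infinity>" and "edom f \<noteq> {}"
    using \<open>proper_fun f\<close> unfolding proper_fun_def by auto
  obtain mu x0 M where "lam < mu" "\<And>w. ereal (M - (norm (w - x0))\<^sup>2 / (2 * mu)) \<le> f w"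
    using prox_threshold_quadratic_minorant[OF \<open>ereal lam < prox_threshold f\<close>] by blast
  then have coercive: "quadratically_coercive g"
    unfolding g_def by (rule quadratically_coercive_add_jfun[OF lam])
  have convex_if_A: "econvex g" if A
    using that unfolding A_def g_def by (rule econvex_if_prox_subdiff_nonempty[OF lam not_MInf \<open>convex (edom f)\<close>])
  have prox_eq_lim: "prox_subdiff lam f = lim_subdiff f" if "econvex g"
    using that unfolding g_def by (rule prox_subdiff_eq_lim_subdiff[where f = f, OF lam not_MInf])
  have "A \<Longrightarrow> D" "D \<Longrightarrow> E" "E \<Longrightarrow> A"
    using convex_if_A prox_eq_lim subdiff_dom_prox_subdiff_eq_iff[of lam f]
    unfolding A_def D_def E_def by auto
  moreover have "A \<Longrightarrow> C"
    using convex_if_A maximal_monotone_prox_map[OF lam \<open>lsc_fun f\<close> coercive[unfolded g_def] _ \<open>edom f \<noteq> {}\<close>]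
      subdiff_dom_lim_subdiff_conv_fun[where f = f, OF lam not_MInf]
    unfolding A_def C_def g_def by blast
  moreover have "C \<Longrightarrow> B"
    unfolding B_def C_def conv_map_eq_self_iff by (auto intro: maximal_monotone_convex_values)
  moreover have "B \<Longrightarrow> A"
    using prox_subdiff_nonempty_if_convex_prox_map[OF lam \<open>lsc_fun f\<close> coercive[unfolded g_def]]
    unfolding A_def B_def g_def conv_map_eq_self_iff by blast
  ultimately show ?thesis
    by blast
qed

end
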